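(* Let $P$ be a 6-stack. Then $P$ has a proper retract which (with the induced order) is isomorphic to a tower of sections if and only if $r(P)$ is a multiple of $3$. Consequently, $P$ is minimal automorphic if and only if $r(P)$ is not a multiple of $3$.
   Context: All posets are finite. For a poset $P$ and $p\in P$, the rank $r(p)$ of $p$ is the largest $m$ such that there is a chain $p_0<\dots<p_m=p$ in $P$. $P$ is ranked of rank $r(P)$ if every maximal chain has exactly $r(P)+1$ elements. For $0\le i\le j$, $P(i,j)=\{p\in P:i\le r(p)\le j\}$ (induced order). A subset $Q\subseteq P$ (induced order) is a retract of $P$ if there is an order-preserving $f:P\to Q$ with $f(q)=q$ for all $q\in Q$; it is proper if $Q\neq P$. The 6-crown $C_6$ is the poset on $\{x_0,x_1,x_2,y_0,y_1,y_2\}$ whose only strict comparabilities are $x_0<y_0>x_1<y_1>x_2<y_2>x_0$. A 6-stack is a ranked poset $P$ of rank $n\ge1$ such that $P(i,i+1)\cong C_6$ for each $0\le i<n$. The ordinal sum of posets $P_1,\dots,P_k$ ($k\ge1$) is their disjoint union ordered by the orders of the $P_i$ together with $p<q$ whenever $p\in P_i,q\in P_j,i<j$. A section is either a two-element antichain or a poset on the set $\{[i,k]: 0\le i\le 2,\ 0\le k\le n\}$ (with $3(n+1)$ distinct elements), for some $n\ge 1$, such that: (1) $[i,k]<[i,l]$ whenever $0\le k<l\le n$; (2) for each $k$, $\{[0,k],[1,k],[2,k]\}$ is an antichain; (3) $[i,k]<[j,l]$ implies $[i+1,k]<[j+1,l]$ (first indices mod $3$); (4) for each $0\le k<n$ there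 are $i,j$ with $[i,k]\not<[j,k+1]$. A tower of sections is an ordinal sum of one or more sections. A poset is automorphic if it has an automorphism with no fixed point; it is minimal automorphic if it is automorphic and no proper retract of it is automorphic. *)

theory Defs
  imports Main
begin

definition strict :: "'a rel \<Rightarrow> 'a rel" where
  "strict r = {(x, y). (x, y) \<in> r \<and> x \<noteq> y}"

definition fin_poset :: "'a set \<Rightarrow> 'a rel \<Rightarrow> bool" where
  "fin_poset S r \<longleftrightarrow> finite S \<and> partial_order_on S r"

definition elem_rank :: "'a set \<Rightarrow> 'a rel \<Rightarrow> 'a \<Rightarrow> nat" where
  "elem_rank S r p = (GREATEST m. \<exists>xs. length xs = Suc m \<and> set xs \<subseteq> S
      \<and> sorted_wrt (\<lambda>x y. (x, y) \<in> strict r) xs \<and> last xs = p)"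

definition is_chain :: "'a set \<Rightarrow> 'a rel \<Rightarrow> 'a set \<Rightarrow> bool" where
  "is_chain S r C \<longleftrightarrow> C \<subseteq> S \<and> (\<forall>x\<in>C. \<forall>y\<in>C. (x, y) \<in> r \<or> (y, x) \<in> r)"

definition is_maxchain :: "'a set \<Rightarrow> 'a rel \<Rightarrow> 'a set \<Rightarrow> bool" where
  "is_maxchain S r C \<longleftrightarrow> is_chain S r C \<and> \<not> (\<exists>D. is_chain S r D \<and> C \<subset> D)"

definition ranked :: "'a set \<Rightarrow> 'a rel \<Rightarrow> nat \<Rightarrow> bool" where
  "ranked S r n \<longleftrightarrow> (\<forall>C. is_maxchain S r C \<longrightarrow> card C = Suc n)"

text \<open>P(i,j) as a carrier; the order is the induced one, Restr r.\<close>
definition rank_slice :: "'a set \<Rightarrow> 'a rel \<Rightarrow> nat \<Rightarrow> nat \<Rightarrow> 'a set" where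
  "rank_slice S r i j = {p \<in> S. i \<le> elem_rank S r p \<and> elem_rank S r p \<le> j}"

definition order_iso :: "'a set \<Rightarrow> 'a rel \<Rightarrow> 'b set \<Rightarrow> 'b rel \<Rightarrow> ('a \<Rightarrow> 'b) \<Rightarrow> bool" where
  "order_iso S r T s f \<longleftrightarrow> bij_betw f S T \<and>
     (\<forall>x\<in>S. \<forall>y\<in>S. (x, y) \<in> r \<longleftrightarrow> (f x, f y) \<in> s)"

definition isomorphic :: "'a set \<Rightarrow> 'a rel \<Rightarrow> 'b set \<Rightarrow> 'b rel \<Rightarrow> bool" where
  "isomorphic S r T s \<longleftrightarrow> (\<exists>f. order_iso S r T s f)"

text \<open>The 6-crown: x_i = i, y_i = 3 + i (i = 0,1,2);
  x0 < y0 > x1 < y1 > x2 < y2 > x0.\<close>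
definition crown6_carrier :: "nat set" where
  "crown6_carrier = {0..5}"

definition crown6_rel :: "nat rel" where
  "crown6_rel = Id_on crown6_carrier \<union> {(0,3), (1,3), (1,4), (2,4), (2,5), (0,5)}"

definition six_stack :: "'a set \<Rightarrow> 'a rel \<Rightarrow> nat \<Rightarrow> bool" where
  "six_stack S r n \<longleftrightarrow> fin_poset S r \<and> n \<ge> 1 \<and> ranked S r n \<and>
     (\<forall>i<n. isomorphic (rank_slice S r i (Suc i)) (Restr r (rank_slice S r i (Suc i)))
                        crown6_carrier crown6_rel)"

definition is_retract :: "'a set \<Rightarrow> 'a rel \<Rightarrow> 'a set \<Rightarrow> bool" where
  "is_retract S r Q \<longleftrightarrow> Q \<subseteq> S \<and> (\<exists>f. f ` S \<subseteq> Q \<and>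
     (\<forall>x\<in>S. \<forall>y\<in>S. (x, y) \<in> r \<longrightarrow> (f x, f y) \<in> r) \<and> (\<forall>q\<in>Q. f q = q))"

definition proper_retract :: "'a set \<Rightarrow> 'a rel \<Rightarrow> 'a set \<Rightarrow> bool" where
  "proper_retract S r Q \<longleftrightarrow> is_retract S r Q \<and> Q \<noteq> S"

definition automorphic :: "'a set \<Rightarrow> 'a rel \<Rightarrow> bool" where
  "automorphic S r \<longleftrightarrow> (\<exists>f. order_iso S r S r f \<and> (\<forall>x\<in>S. f x \<noteq> x))"

definition minimal_automorphic :: "'a set \<Rightarrow> 'a rel \<Rightarrow> bool" where
  "minimal_automorphic S r \<longleftrightarrow> automorphic S r \<and>
     \<not> (\<exists>Q. proper_retract S r Q \<and> automorphic Q (Restr r Q))"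

text \<open>Sections, on carriers of type nat \<times> nat; the element [i,k] is (i,k).
  The two-element antichain is represented by a fixed copy (sections matter only up to
  isomorphism, since towers are only used up to isomorphism).\<close>
definition is_section :: "(nat \<times> nat) set \<Rightarrow> (nat \<times> nat) rel \<Rightarrow> bool" where
  "is_section A s \<longleftrightarrow>
     (A = {(0,0), (1,0)} \<and> s = Id_on A) \<or>
     (\<exists>n\<ge>1. A = {0..2} \<times> {0..n} \<and> partial_order_on A s \<and>
        (\<forall>i\<le>2. \<forall>k l. k < l \<and> l \<le> n \<longrightarrow> ((i, k), (i, l)) \<in> strict s) \<and>
        (\<forall>k\<le>n. \<forall>i\<le>2. \<forall>j\<le>2. i \<noteq> j \<longrightarrow> ((i, k), (j, k)) \<notin> s) \<and>
        (\<forall>i k j l. ((i, k), (j, l)) \<in> strict s \<longrightarrow>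
            (((i + 1) mod 3, k), ((j + 1) mod 3, l)) \<in> strict s) \<and>
        (\<forall>k<n. \<exists>i\<le>2. \<exists>j\<le>2. ((i, k), (j, Suc k)) \<notin> strict s))"

definition ord_sum_carrier :: "('b set \<times> 'b rel) list \<Rightarrow> (nat \<times> 'b) set" where
  "ord_sum_carrier ps = {(k, x). k < length ps \<and> x \<in> fst (ps ! k)}"

definition ord_sum_rel :: "('b set \<times> 'b rel) list \<Rightarrow> (nat \<times> 'b) rel" where
  "ord_sum_rel ps = {((k, x), (l, y)). (k, x) \<in> ord_sum_carrier ps \<and> (l, y) \<in> ord_sum_carrier ps \<and>
      ((k = l \<and> (x, y) \<in> snd (ps ! k)) \<or> k < l)}"

definition iso_to_tower :: "'a set \<Rightarrow> 'a rel \<Rightarrow> bool" where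
  "iso_to_tower Q q \<longleftrightarrow> (\<exists>ps. ps \<noteq> [] \<and> (\<forall>p\<in>set ps. is_section (fst p) (snd p)) \<and>
      isomorphic Q q (ord_sum_carrier ps) (ord_sum_rel ps))"

end

theory Submission
  imports Defs
begin

(*
  A 6-stack of rank n is determined up to isomorphism: its ranks have three elements each, and
  labelling them consistently identifies it with the standard stack on {0,1,2} x {0..n}, in which
  (a, k) < (b, k + 1) unless b = a + 1 (mod 3), and ranks two apart are completely comparable.

  The rotation of the rows is a fixed-point-free automorphism. Conversely, a fixed-point-free
  order-preserving self-map h cannot move any element to a comparable one (its iterates would
  leave the stack), so h x is one of four neighbours of x. Which side of x the image lies on
  propagates from rank to rank, and following it through all n ranks shifts the rows by n;
  if 3 does not divide n this forces h to be a rotation, hence injective. Composing a retraction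
  onto a proper retract with an automorphism of the retract would give a non-injective such map,
  so no proper retract is automorphic: the stack is minimal automorphic, and in particular it has
  no retract isomorphic to a tower of sections, since towers are automorphic.

  If 3 divides n, folding rank 3i onto two of its elements and ranks 3i + 1, 3i + 2 onto one
  element each is a retraction whose image is an ordinal sum of two-element antichains.
*)

lemma less_3_cases: "(a::nat) < 3 \<Longrightarrow> a = 0 \<or> a = 1 \<or> a = 2"
  by auto

lemma mod_3_add_right_cancel:
  assumes "(a::nat) < 3" "b < 3" "(a + d) mod 3 = (b + d) mod 3"
  shows "a = b"
proof -
  have "(a + 3 * d) mod 3 = ((a + d) mod 3 + 2 * d) mod 3" "(b + 3 * d) mod 3 = ((b + d) mod 3 + 2 * d) mod 3"
    by (simp_all add: mod_add_left_eq)
  then show ?thesis using assms by simp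
qed

lemma mod_3_ne_add_2_iff: "a < 3 \<Longrightarrow> b < 3 \<Longrightarrow> a \<noteq> (b + 2) mod 3 \<longleftrightarrow> b \<noteq> (a + 1) mod (3::nat)"
proof -
  assume "a < 3" "b < 3"
  then have "a = 0 \<or> a = 1 \<or> a = 2" "b = 0 \<or> b = 1 \<or> b = 2" by auto
  then show ?thesis by (elim disjE) simp_all
qed

lemma exists_row_between:
  assumes "a < 3" "b < 3"
  shows "\<exists>c\<in>{0, 1, 2::nat}. a \<noteq> (c + 2) mod 3 \<and> c \<noteq> (b + 2) mod 3"
proof -
  have "a = 0 \<or> a = 1 \<or> a = 2" "b = 0 \<or> b = 1 \<or> b = 2" using assms by auto
  then show ?thesis by (elim disjE) simp_all
qed

lemma bij_betw_add_2_mod_3: "bij_betw (\<lambda>a. (a + 2) mod 3) {..<3} {..<(3::nat)}"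
proof -
  have "inj_on (\<lambda>a. (a + 2) mod 3) {..<(3::nat)}"
  proof
    fix a b :: nat assume "a \<in> {..<3}" "b \<in> {..<3}" "(a + 2) mod 3 = (b + 2) mod 3"
    then show "a = b" using mod_3_add_right_cancel[of a b 2] by simp
  qed
  moreover have "(\<lambda>a. (a + 2) mod 3) ` {..<3} \<subseteq> {..<(3::nat)}"
    by (simp add: image_subset_iff)
  ultimately show ?thesis
    unfolding bij_betw_def using endo_inj_surj[of "{..<3::nat}"] by simp
qed

lemma mod_3_decomp:
  obtains i r where "(k::nat) = 3 * i + r" "r < 3" "k mod 3 = r"
proof
  show "k = 3 * (k div 3) + k mod 3" by simp
qed simp_all

lemma funpow_Suc_2: "f ^^ Suc 2 = f \<circ> f \<circ> f"
  by (simp add: numeral_2_eq_2 comp_assoc)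

section \<open>Order isomorphisms, retracts and automorphisms\<close>

lemma order_iso_inv:
  assumes "order_iso A a B b f"
  shows "order_iso B b A a (inv_into A f)"
proof -
  have bij: "bij_betw f A B" and ord: "\<forall>x\<in>A. \<forall>y\<in>A. (x, y) \<in> a \<longleftrightarrow> (f x, f y) \<in> b"
    using assms unfolding order_iso_def by blast+
  have "(x, y) \<in> b \<longleftrightarrow> (inv_into A f x, inv_into A f y) \<in> a" if "x \<in> B" "y \<in> B" for x y
    using ord bij that bij_betw_inv_into_right[OF bij] bij_betwE[OF bij_betw_inv_into[OF bij]]
    by metis
  then show ?thesis
    unfolding order_iso_def using bij_betw_inv_into[OF bij] by blast
qed

lemma order_iso_comp:
  assumes "order_iso A a B b f" "order_iso B b C c g"
  shows "order_iso A a C c (g \<circ> f)"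
  using assms unfolding order_iso_def by (auto intro: bij_betw_trans dest: bij_betwE)

lemma order_iso_restrict:
  assumes "order_iso A a B b f" "Q \<subseteq> A"
  shows "order_iso Q (Restr a Q) (f ` Q) (Restr b (f ` Q)) f"
  using assms unfolding order_iso_def bij_betw_def by (auto intro: inj_on_subset)

lemma automorphic_order_iso:
  assumes iso: "order_iso A a B b f" and "automorphic A a"
  shows "automorphic B b"
proof -
  obtain g where g: "order_iso A a A a g" and no_fix: "\<forall>x\<in>A. g x \<noteq> x"
    using assms(2) unfolding automorphic_def by blast
  let ?g' = "f \<circ> g \<circ> inv_into A f"
  have bij: "bij_betw f A B" using iso unfolding order_iso_def by blast
  have "order_iso B b B b ?g'"
    using order_iso_comp[OF order_iso_comp[OF order_iso_inv[OF iso] g] iso] by (simp add: comp_assoc)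
  moreover have "?g' y \<noteq> y" if "y \<in> B" for y
  proof
    let ?x = "inv_into A f y"
    have x: "?x \<in> A" "f ?x = y"
      using that bij bij_betwE bij_betw_inv_into bij_betw_inv_into_right by metis+
    have gx: "g ?x \<in> A"
      using g x(1) unfolding order_iso_def by (blast dest: bij_betwE)
    assume "?g' y = y"
    then have "f (g ?x) = f ?x" using x(2) by simp
    then have "g ?x = ?x"
      using inj_onD[OF bij_betw_imp_inj_on[OF bij] _ gx x(1)] by blast
    then show False using no_fix x(1) by blast
  qed
  ultimately show ?thesis unfolding automorphic_def by blast
qed

lemma iso_to_tower_order_iso:
  assumes "order_iso A a B b f" "iso_to_tower A a"
  shows "iso_to_tower B b"
  using assms order_iso_comp[OF order_iso_inv[OF assms(1)]]
  unfolding iso_to_tower_def isomorphic_def by blast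

lemma proper_retract_order_iso:
  assumes iso: "order_iso A a B b f" and "proper_retract A a Q"
  shows "proper_retract B b (f ` Q)"
proof -
  obtain g where QA: "Q \<subseteq> A" "Q \<noteq> A" and g: "g ` A \<subseteq> Q" "\<forall>q\<in>Q. g q = q"
    and mono: "\<forall>x\<in>A. \<forall>y\<in>A. (x, y) \<in> a \<longrightarrow> (g x, g y) \<in> a"
    using assms(2) unfolding proper_retract_def is_retract_def by blast
  have bij: "bij_betw f A B" and ord: "\<forall>x\<in>A. \<forall>y\<in>A. (x, y) \<in> a \<longleftrightarrow> (f x, f y) \<in> b"
    using iso unfolding order_iso_def by blast+
  let ?f' = "inv_into A f"
  have f': "?f' y \<in> A" "f (?f' y) = y" if "y \<in> B" for y
    using that bij bij_betwE bij_betw_inv_into bij_betw_inv_into_right by metis+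
  have "f ` Q \<subseteq> B" using QA(1) bij bij_betw_imp_surj_on by blast
  moreover have "f ` Q \<noteq> B"
    using QA inj_on_image_eq_iff[OF bij_betw_imp_inj_on[OF bij] QA(1) order_refl]
      bij_betw_imp_surj_on[OF bij] by blast
  moreover have "(f \<circ> g \<circ> ?f') ` B \<subseteq> f ` Q"
    using f'(1) g(1) by fastforce
  moreover have "(f \<circ> g \<circ> ?f') q = q" if "q \<in> f ` Q" for q
    using that g(2) QA(1) inv_into_f_f[OF bij_betw_imp_inj_on[OF bij]] by auto
  moreover have "((f \<circ> g \<circ> ?f') x, (f \<circ> g \<circ> ?f') y) \<in> b"
    if "x \<in> B" "y \<in> B" "(x, y) \<in> b" for x y
  proof -
    have "(?f' x, ?f' y) \<in> a" using that f' ord by metis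
    then have "(g (?f' x), g (?f' y)) \<in> a" using that f' mono by blast
    moreover have "g (?f' x) \<in> A" "g (?f' y) \<in> A" using that f' g(1) QA(1) by auto
    ultimately show ?thesis using ord by simp
  qed
  ultimately show ?thesis
    unfolding proper_retract_def is_retract_def by blast
qed

lemma tower_retract_order_iso:
  assumes iso: "order_iso A a B b f" and "proper_retract A a Q" "iso_to_tower Q (Restr a Q)"
  shows "proper_retract B b (f ` Q) \<and> iso_to_tower (f ` Q) (Restr b (f ` Q))"
proof -
  have "Q \<subseteq> A" using assms(2) unfolding proper_retract_def is_retract_def by blast
  then show ?thesis
    using proper_retract_order_iso[OF iso assms(2)]
      iso_to_tower_order_iso[OF order_iso_restrict[OF iso] assms(3)] by blast
qed

lemma minimal_automorphic_order_iso:
  assumes iso: "order_iso A a B b f" and min: "minimal_automorphic A a"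
  shows "minimal_automorphic B b"
  unfolding minimal_automorphic_def
proof (intro conjI notI)
  show "automorphic B b"
    using automorphic_order_iso[OF iso] min unfolding minimal_automorphic_def by blast
  assume "\<exists>Q. proper_retract B b Q \<and> automorphic Q (Restr b Q)"
  then obtain Q where Q: "proper_retract B b Q" "automorphic Q (Restr b Q)" by blast
  let ?g = "inv_into A f"
  have "Q \<subseteq> B" using Q(1) unfolding proper_retract_def is_retract_def by blast
  then have "proper_retract A a (?g ` Q)" "automorphic (?g ` Q) (Restr a (?g ` Q))"
    using proper_retract_order_iso[OF order_iso_inv[OF iso] Q(1)]
      automorphic_order_iso[OF order_iso_restrict[OF order_iso_inv[OF iso]] Q(2)] by blast+
  then show False using min unfolding minimal_automorphic_def by blast
qed

lemma automorphic_if_periodic: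
  assumes maps: "f ` A \<subseteq> A" and period: "\<forall>x\<in>A. (f ^^ Suc m) x = x"
    and mono: "\<forall>x\<in>A. \<forall>y\<in>A. (x, y) \<in> s \<longrightarrow> (f x, f y) \<in> s"
    and no_fix: "\<forall>x\<in>A. f x \<noteq> x"
  shows "automorphic A s"
proof -
  have pow_maps: "(f ^^ k) x \<in> A" if "x \<in> A" for k x
    using that maps by (induction k) auto
  have pow_mono: "((f ^^ k) x, (f ^^ k) y) \<in> s" if "x \<in> A" "y \<in> A" "(x, y) \<in> s" for k x y
    using that by (induction k) (simp_all add: mono pow_maps)
  have left_inv: "(f ^^ m) (f x) = x" if "x \<in> A" for x
    using period that by (metis comp_apply funpow_Suc_right)
  have right_inv: "f ((f ^^ m) x) = x" if "x \<in> A" for x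
    using period that by (metis comp_apply funpow.simps(2))
  have "bij_betw f A A"
    by (rule bij_betw_byWitness[where f' = "f ^^ m"]) (use left_inv right_inv maps pow_maps in auto)
  moreover have "(x, y) \<in> s" if "x \<in> A" "y \<in> A" "(f x, f y) \<in> s" for x y
    using pow_mono[of "f x" "f y" m] that maps left_inv by auto
  ultimately show ?thesis
    unfolding automorphic_def order_iso_def using mono no_fix by blast
qed

lemma no_automorphic_proper_retract:
  assumes fin: "finite S"
    and inj: "\<And>h. h ` S \<subseteq> S \<Longrightarrow> \<forall>x\<in>S. \<forall>y\<in>S. (x, y) \<in> r \<longrightarrow> (h x, h y) \<in> r \<Longrightarrow>
        \<forall>x\<in>S. h x \<noteq> x \<Longrightarrow> inj_on h S"
    and retract: "proper_retract S r Q"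
  shows "\<not> automorphic Q (Restr r Q)"
proof
  assume "automorphic Q (Restr r Q)"
  then obtain g where g: "order_iso Q (Restr r Q) Q (Restr r Q) g" and no_fix: "\<forall>x\<in>Q. g x \<noteq> x"
    unfolding automorphic_def by blast
  obtain f where QS: "Q \<subseteq> S" "Q \<noteq> S" and f: "f ` S \<subseteq> Q" "\<forall>q\<in>Q. f q = q"
    and f_mono: "\<forall>x\<in>S. \<forall>y\<in>S. (x, y) \<in> r \<longrightarrow> (f x, f y) \<in> r"
    using retract unfolding proper_retract_def is_retract_def by blast
  have gQ: "g ` Q \<subseteq> Q" using g unfolding order_iso_def bij_betw_def by blast
  have g_mono: "(g x, g y) \<in> r" if "x \<in> Q" "y \<in> Q" "(x, y) \<in> r" for x y
    using g that unfolding order_iso_def by blast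
  have fQ: "f x \<in> Q" if "x \<in> S" for x using f(1) that by blast
  have "(g \<circ> f) ` S \<subseteq> Q" using fQ gQ by auto
  moreover have "\<forall>x\<in>S. \<forall>y\<in>S. (x, y) \<in> r \<longrightarrow> ((g \<circ> f) x, (g \<circ> f) y) \<in> r"
    using fQ f_mono g_mono by simp
  moreover have "\<forall>x\<in>S. (g \<circ> f) x \<noteq> x"
  proof (intro ballI notI)
    fix x assume "x \<in> S" "(g \<circ> f) x = x"
    then have "x \<in> Q" using fQ gQ by (metis comp_apply image_subset_iff)
    then show False using f(2) no_fix \<open>(g \<circ> f) x = x\<close> by simp
  qed
  ultimately have "inj_on (g \<circ> f) S" "(g \<circ> f) ` S \<subseteq> Q" using inj QS(1) by auto
  then have "card S \<le> card Q"
    using card_inj_on_le finite_subset[OF QS(1) fin] by blast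
  then show False
    using QS card_seteq[OF fin QS(1)] by blast
qed

section \<open>Towers of sections are automorphic\<close>

lemma section_automorphic:
  assumes "is_section A s"
  shows "automorphic A s"
  using assms unfolding is_section_def
proof (elim disjE exE conjE)
  assume A: "A = {(0, 0), (1, 0)}" and s: "s = Id_on A"
  show ?thesis
    by (rule automorphic_if_periodic[where f = "\<lambda>(i, k). (1 - i, k)" and m = 1])
      (auto simp: A s)
next
  fix m
  assume A: "A = {0..2} \<times> {0..m}" and po: "partial_order_on A s"
    and shift: "\<forall>i k j l. ((i, k), (j, l)) \<in> strict s \<longrightarrow>
            (((i + 1) mod 3, k), ((j + 1) mod 3, l)) \<in> strict s"
  let ?f = "\<lambda>(i, k). ((i + 1) mod 3, k)"
  have maps: "?f x \<in> A" if "x \<in> A" for x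
    using that A by (cases x) simp
  show ?thesis
  proof (rule automorphic_if_periodic[where f = ?f and m = 2])
    show "?f ` A \<subseteq> A" using maps by (rule image_subsetI)
    show "\<forall>x\<in>A. (?f ^^ Suc 2) x = x"
      unfolding funpow_Suc_2 using A by (simp add: mod_Suc_eq split: prod.splits)
    show "\<forall>x\<in>A. ?f x \<noteq> x"
      using A by (simp add: mod_Suc split: prod.splits)
    show "\<forall>x\<in>A. \<forall>y\<in>A. (x, y) \<in> s \<longrightarrow> (?f x, ?f y) \<in> s"
    proof (intro ballI impI)
      fix x y assume xy: "x \<in> A" "y \<in> A" "(x, y) \<in> s"
      show "(?f x, ?f y) \<in> s"
      proof (cases "x = y")
        case True
        then show ?thesis
          using po maps[OF xy(1)] unfolding partial_order_on_def preorder_on_def refl_on_def by blast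
      next
        case False
        obtain i k j l where "x = (i, k)" "y = (j, l)" by fastforce
        then show ?thesis
          using shift[rule_format, of i k j l] False xy(3) unfolding strict_def by simp
      qed
    qed
  qed
qed

lemma mem_ord_sum_carrier: "(k, x) \<in> ord_sum_carrier ps \<longleftrightarrow> k < length ps \<and> x \<in> fst (ps ! k)"
  by (simp add: ord_sum_carrier_def)

lemma mem_ord_sum_rel:
  "((k, x), (l, y)) \<in> ord_sum_rel ps \<longleftrightarrow> (k, x) \<in> ord_sum_carrier ps \<and> (l, y) \<in> ord_sum_carrier ps
     \<and> (k = l \<and> (x, y) \<in> snd (ps ! k) \<or> k < l)"
  by (simp add: ord_sum_rel_def)

lemma ord_sum_automorphic:
  assumes "\<forall>p\<in>set ps. automorphic (fst p) (snd p)"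
  shows "automorphic (ord_sum_carrier ps) (ord_sum_rel ps)"
proof -
  have "\<forall>k. \<exists>g. k < length ps \<longrightarrow> order_iso (fst (ps ! k)) (snd (ps ! k)) (fst (ps ! k)) (snd (ps ! k)) g
      \<and> (\<forall>x\<in>fst (ps ! k). g x \<noteq> x)"
    using assms unfolding automorphic_def by (metis nth_mem)
  then obtain g where g: "\<And>k. k < length ps \<Longrightarrow>
      order_iso (fst (ps ! k)) (snd (ps ! k)) (fst (ps ! k)) (snd (ps ! k)) (g k)
      \<and> (\<forall>x\<in>fst (ps ! k). g k x \<noteq> x)"
    by metis
  let ?C = "ord_sum_carrier ps"
  let ?g = "\<lambda>(k, x). (k, g k x)"
  let ?g' = "\<lambda>(k, x). (k, inv_into (fst (ps ! k)) (g k) x)"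
  have bij: "bij_betw (g k) (fst (ps ! k)) (fst (ps ! k))" if "k < length ps" for k
    using g[OF that] unfolding order_iso_def by blast
  have ord: "(x, y) \<in> snd (ps ! k) \<longleftrightarrow> (g k x, g k y) \<in> snd (ps ! k)"
    if "k < length ps" "x \<in> fst (ps ! k)" "y \<in> fst (ps ! k)" for k x y
    using g[OF that(1)] that(2,3) unfolding order_iso_def by blast
  have inv: "g k x \<in> fst (ps ! k)" "inv_into (fst (ps ! k)) (g k) x \<in> fst (ps ! k)"
    "inv_into (fst (ps ! k)) (g k) (g k x) = x" "g k (inv_into (fst (ps ! k)) (g k) x) = x"
    if "k < length ps" "x \<in> fst (ps ! k)" for k x
    using bij[OF that(1)] that(2) bij_betwE bij_betw_inv_into bij_betw_inv_into_left
      bij_betw_inv_into_right by metis+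
  have "bij_betw ?g ?C ?C"
  proof (rule bij_betw_byWitness[where f' = ?g'])
    show "\<forall>p\<in>?C. ?g' (?g p) = p" "\<forall>p\<in>?C. ?g (?g' p) = p"
      by (simp_all add: ord_sum_carrier_def inv(3,4) split: prod.splits)
    show "?g ` ?C \<subseteq> ?C" "?g' ` ?C \<subseteq> ?C"
      by (clarsimp simp: mem_ord_sum_carrier inv(1,2))+
  qed
  moreover have "(p, q) \<in> ord_sum_rel ps \<longleftrightarrow> (?g p, ?g q) \<in> ord_sum_rel ps"
    if "p \<in> ?C" "q \<in> ?C" for p q
  proof -
    obtain k x l y where pq: "p = (k, x)" "q = (l, y)" by fastforce
    then have "k < length ps" "x \<in> fst (ps ! k)" "l < length ps" "y \<in> fst (ps ! l)"
      using that by (simp_all add: mem_ord_sum_carrier)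
    then show ?thesis
      using pq ord[of k x y] inv(1) by (auto simp: mem_ord_sum_rel mem_ord_sum_carrier)
  qed
  moreover have "?g p \<noteq> p" if "p \<in> ?C" for p
    using that g by (auto simp: ord_sum_carrier_def)
  ultimately show ?thesis
    unfolding automorphic_def order_iso_def by blast
qed

lemma iso_to_tower_automorphic:
  assumes "iso_to_tower Q q"
  shows "automorphic Q q"
proof -
  obtain ps f where "\<forall>p\<in>set ps. is_section (fst p) (snd p)"
    and iso: "order_iso Q q (ord_sum_carrier ps) (ord_sum_rel ps) f"
    using assms unfolding iso_to_tower_def isomorphic_def by blast
  then have "automorphic (ord_sum_carrier ps) (ord_sum_rel ps)"
    using section_automorphic ord_sum_automorphic by blast
  then show ?thesis
    using automorphic_order_iso[OF order_iso_inv[OF iso]] by blast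
qed

section \<open>The standard 6-stack\<close>

definition stack_le :: "nat \<times> nat \<Rightarrow> nat \<times> nat \<Rightarrow> bool" where
  "stack_le x y \<longleftrightarrow>
     x = y \<or> snd x + 2 \<le> snd y \<or> (snd y = Suc (snd x) \<and> fst y \<noteq> (fst x + 1) mod 3)"

definition std_stack :: "nat \<Rightarrow> (nat \<times> nat) set" where
  "std_stack n = {..<3} \<times> {..n}"

definition std_stack_rel :: "nat \<Rightarrow> (nat \<times> nat) rel" where
  "std_stack_rel n = {(x, y). x \<in> std_stack n \<and> y \<in> std_stack n \<and> stack_le x y}"

definition row_shift :: "nat \<Rightarrow> nat \<times> nat \<Rightarrow> nat \<times> nat" where
  "row_shift d x = ((fst x + d) mod 3, snd x)"

lemma mem_std_stack [simp]: "(a, k) \<in> std_stack n \<longleftrightarrow> a < 3 \<and> k \<le> n"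
  by (simp add: std_stack_def)

lemma stack_le_trans: "stack_le x y \<Longrightarrow> stack_le y z \<Longrightarrow> stack_le x z"
  unfolding stack_le_def by auto

lemma stack_le_rank_less: "stack_le x y \<Longrightarrow> x \<noteq> y \<Longrightarrow> snd x < snd y"
  unfolding stack_le_def by auto

lemma stack_le_rank_0: "stack_le c (b, 0) \<Longrightarrow> c = (b, 0)"
  by (auto simp: stack_le_def)

lemma stack_le_row_shift_1:
  assumes "a < 3" "b < 3"
  shows "stack_le (row_shift 1 (a, k)) (row_shift 1 (b, l)) \<longleftrightarrow> stack_le (a, k) (b, l)"
  using less_3_cases[OF assms(1)] less_3_cases[OF assms(2)]
  by (elim disjE) (simp_all add: stack_le_def row_shift_def)

lemma std_stack_automorphic: "automorphic (std_stack n) (std_stack_rel n)"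
proof (rule automorphic_if_periodic[where f = "row_shift 1" and m = 2])
  show "row_shift 1 ` std_stack n \<subseteq> std_stack n"
    by (auto simp: std_stack_def row_shift_def)
  show "\<forall>x\<in>std_stack n. (row_shift 1 ^^ Suc 2) x = x"
    unfolding funpow_Suc_2 by (simp add: std_stack_def row_shift_def mod_Suc_eq)
  show "\<forall>x\<in>std_stack n. row_shift 1 x \<noteq> x"
    by (auto simp: std_stack_def row_shift_def mod_Suc)
  show "\<forall>x\<in>std_stack n. \<forall>y\<in>std_stack n. (x, y) \<in> std_stack_rel n \<longrightarrow>
      (row_shift 1 x, row_shift 1 y) \<in> std_stack_rel n"
    using stack_le_row_shift_1 by (force simp: std_stack_rel_def std_stack_def row_shift_def)
qed

lemma row_shift_inj_on: "inj_on (row_shift d) (std_stack n)"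
proof (rule inj_onI)
  fix x y assume "x \<in> std_stack n" "y \<in> std_stack n" "row_shift d x = row_shift d y"
  moreover obtain a k b l where "x = (a, k)" "y = (b, l)" by fastforce
  ultimately show "x = y"
    using mod_3_add_right_cancel[of a b d] by (simp add: row_shift_def)
qed

definition stack_neighbour :: "nat \<times> nat \<Rightarrow> nat \<times> nat \<Rightarrow> bool" where
  "stack_neighbour x y \<longleftrightarrow> y = row_shift 1 x \<or> y = row_shift 2 x
     \<or> y = ((fst x + 1) mod 3, Suc (snd x)) \<or> (0 < snd x \<and> y = ((fst x + 2) mod 3, snd x - 1))"

lemma incomparable_stack_neighbour:
  assumes "a < 3" "b < 3" "(b, l) \<noteq> (a, k)"
    and "\<not> stack_le (a, k) (b, l)" "\<not> stack_le (b, l) (a, k)"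
  shows "stack_neighbour (a, k) (b, l)"
proof -
  have "l = k \<or> l = Suc k \<or> k = Suc l"
    using assms(4,5) by (auto simp: stack_le_def)
  then show ?thesis
    using less_3_cases[OF assms(1)] less_3_cases[OF assms(2)] assms(3-5)
    by (elim disjE) (auto simp: stack_le_def stack_neighbour_def row_shift_def)
qed

lemma stack_neighbour_below_left:
  assumes "a < 3" "stack_neighbour (a, k) (b, l)" "stack_le (b, l) ((a + 2) mod 3, Suc k)"
  shows "stack_le (b, l) (row_shift 2 (a, k))"
  using less_3_cases[OF assms(1)] assms(2,3)
  by (elim disjE) (auto simp: stack_le_def stack_neighbour_def row_shift_def)

lemma stack_neighbour_below_right:
  assumes "a < 3" "stack_neighbour (a, k) (b, l)" "stack_le (b, l) (a, Suc k)"
  shows "stack_le (b, l) (row_shift 1 (a, k))"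
  using less_3_cases[OF assms(1)] assms(2,3)
  by (elim disjE) (auto simp: stack_le_def stack_neighbour_def row_shift_def)

lemma stack_neighbour_top:
  assumes "a < 3" "stack_neighbour (a, n) (b, l)" "l \<le> n"
  shows "stack_le (b, l) (row_shift 2 (a, n)) \<or> stack_le (b, l) (row_shift 1 (a, n))"
  using less_3_cases[OF assms(1)] assms(2,3)
  by (elim disjE) (auto simp: stack_le_def stack_neighbour_def row_shift_def)

lemma stack_neighbour_below_one_side:
  assumes "a < 3" "stack_neighbour (a, k) (b, l)"
  shows "stack_le (b, l) (row_shift 2 (a, k)) \<Longrightarrow> \<not> stack_le (b, l) (row_shift 1 (a, k))
      \<Longrightarrow> (b, l) = row_shift 2 (a, k)"
    and "stack_le (b, l) (row_shift 1 (a, k)) \<Longrightarrow> \<not> stack_le (b, l) (row_shift 2 (a, k))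
      \<Longrightarrow> (b, l) = row_shift 1 (a, k)"
  using less_3_cases[OF assms(1)] assms(2) unfolding stack_neighbour_def row_shift_def
  by (elim disjE; simp add: stack_le_def)+

subsection \<open>Fixed-point-free endomorphisms\<close>

context
  fixes n :: nat and h :: "nat \<times> nat \<Rightarrow> nat \<times> nat"
  assumes maps_to: "x \<in> std_stack n \<Longrightarrow> h x \<in> std_stack n"
    and mono: "x \<in> std_stack n \<Longrightarrow> y \<in> std_stack n \<Longrightarrow> stack_le x y \<Longrightarrow> stack_le (h x) (h y)"
    and no_fixpoint: "x \<in> std_stack n \<Longrightarrow> h x \<noteq> x"

begin

lemma iterates_rise:
  assumes "x \<in> std_stack n" "stack_le x (h x)"
  shows "(h ^^ j) x \<in> std_stack n \<and> stack_le ((h ^^ j) x) ((h ^^ Suc j) x) \<and> snd x + j \<le> snd ((h ^^ j) x)"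
proof (induction j)
  case 0
  then show ?case using assms by simp
next
  case (Suc j)
  let ?y = "(h ^^ j) x"
  have "?y \<in> std_stack n" "stack_le ?y (h ?y)" "snd x + j \<le> snd ?y"
    using Suc by auto
  moreover have "snd ?y < snd (h ?y)"
    using stack_le_rank_less no_fixpoint calculation(1,2) by metis
  ultimately show ?case using maps_to mono by simp
qed

lemma iterates_fall:
  assumes "x \<in> std_stack n" "stack_le (h x) x"
  shows "(h ^^ j) x \<in> std_stack n \<and> stack_le ((h ^^ Suc j) x) ((h ^^ j) x) \<and> snd ((h ^^ j) x) + j \<le> snd x"
proof (induction j)
  case 0
  then show ?case using assms by simp
next
  case (Suc j)
  let ?y = "(h ^^ j) x"
  have "?y \<in> std_stack n" "stack_le (h ?y) ?y" "snd ?y + j \<le> snd x"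
    using Suc by auto
  moreover have "snd (h ?y) < snd ?y"
    using stack_le_rank_less no_fixpoint calculation(1,2) by metis
  ultimately show ?case using maps_to mono by simp
qed

lemma image_incomparable:
  assumes "x \<in> std_stack n"
  shows "\<not> stack_le x (h x)" "\<not> stack_le (h x) x"
proof -
  show "\<not> stack_le x (h x)"
  proof
    assume "stack_le x (h x)"
    from iterates_rise[OF assms this, of "Suc n"] show False
      using assms by (auto simp: std_stack_def)
  qed
  show "\<not> stack_le (h x) x"
  proof
    assume "stack_le (h x) x"
    from iterates_fall[OF assms this, of "Suc n"] show False
      using assms by (auto simp: std_stack_def)
  qed
qed

lemma image_stack_neighbour:
  assumes "a < 3" "k \<le> n"
  shows "stack_neighbour (a, k) (h (a, k))"
proof -
  obtain b l where hb: "h (a, k) = (b, l)" by fastforce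
  then have "b < 3" using maps_to assms by fastforce
  then show ?thesis
    using incomparable_stack_neighbour[OF assms(1)] image_incomparable[of "(a, k)"]
      no_fixpoint[of "(a, k)"] assms hb by simp
qed

definition below_left :: "nat \<times> nat \<Rightarrow> bool" where
  "below_left x \<longleftrightarrow> stack_le (h x) (row_shift 2 x)"

definition below_right :: "nat \<times> nat \<Rightarrow> bool" where
  "below_right x \<longleftrightarrow> stack_le (h x) (row_shift 1 x)"

lemma below_left_Suc:
  assumes "a < 3" "Suc k \<le> n" "below_left (a, Suc k)"
  shows "below_left (a, k)"
proof -
  have "stack_le (a, k) (a, Suc k)"
    using less_3_cases[OF assms(1)] by (elim disjE) (simp_all add: stack_le_def)
  then have "stack_le (h (a, k)) (h (a, Suc k))"
    using mono assms by simp
  then have "stack_le (h (a, k)) ((a + 2) mod 3, Suc k)"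
    using assms(3) stack_le_trans unfolding below_left_def row_shift_def by fastforce
  moreover obtain b l where hb: "h (a, k) = (b, l)" by fastforce
  moreover have "stack_neighbour (a, k) (b, l)"
    using image_stack_neighbour[OF assms(1), of k] assms(2) hb by simp
  ultimately show ?thesis
    using stack_neighbour_below_left[OF assms(1)] unfolding below_left_def by simp
qed

lemma below_right_Suc:
  assumes "a < 3" "Suc k \<le> n" "below_right ((a + 2) mod 3, Suc k)"
  shows "below_right (a, k)"
proof -
  have "stack_le (a, k) ((a + 2) mod 3, Suc k)"
    using less_3_cases[OF assms(1)] by (elim disjE) (simp_all add: stack_le_def)
  then have "stack_le (h (a, k)) (h ((a + 2) mod 3, Suc k))"
    using mono assms by simp
  moreover have "row_shift 1 ((a + 2) mod 3, Suc k) = (a, Suc k)"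
    using less_3_cases[OF assms(1)] by (elim disjE) (simp_all add: row_shift_def)
  ultimately have "stack_le (h (a, k)) (a, Suc k)"
    using assms(3) stack_le_trans unfolding below_right_def by metis
  moreover obtain b l where hb: "h (a, k) = (b, l)" by fastforce
  moreover have "stack_neighbour (a, k) (b, l)"
    using image_stack_neighbour[OF assms(1), of k] assms(2) hb by simp
  ultimately show ?thesis
    using stack_neighbour_below_right[OF assms(1)] unfolding below_right_def by simp
qed

lemma below_left_down:
  assumes "a < 3" "k + d \<le> n" "below_left (a, k + d)"
  shows "below_left (a, k)"
  using assms(2,3) by (induction d) (auto intro: below_left_Suc[OF assms(1)])

lemma below_right_down:
  assumes "b < 3" "k + d \<le> n" "below_right (b, k + d)"
  shows "below_right ((b + d) mod 3, k)"
  using assms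
proof (induction d arbitrary: b)
  case 0
  then show ?case by simp
next
  case (Suc d)
  have "(((b + 1) mod 3) + 2) mod 3 = b"
    using less_3_cases[OF Suc.prems(1)] by (elim disjE) simp_all
  then have "below_right ((b + 1) mod 3, k + d)"
    using below_right_Suc[of "(b + 1) mod 3" "k + d"] Suc.prems by simp
  then have "below_right (((b + 1) mod 3 + d) mod 3, k)"
    using Suc.IH[of "(b + 1) mod 3"] Suc.prems by simp
  then show ?case by (simp add: mod_add_left_eq)
qed

lemma not_below_both_at_bottom:
  assumes "a < 3"
  shows "\<not> (below_left (a, 0) \<and> below_right (a, 0))"
proof
  assume "below_left (a, 0) \<and> below_right (a, 0)"
  then have "h (a, 0) = row_shift 2 (a, 0)" "h (a, 0) = row_shift 1 (a, 0)"
    using stack_le_rank_0 unfolding below_left_def below_right_def row_shift_def by simp_all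
  then have "(a + 2) mod 3 = (a + 1) mod 3"
    unfolding row_shift_def by simp
  then show False
    using less_3_cases[OF assms] by (elim disjE) simp_all
qed

lemma below_some_side_at_top:
  assumes "a < 3"
  shows "below_left (a, n) \<or> below_right (a, n)"
proof -
  obtain b l where hb: "h (a, n) = (b, l)" by fastforce
  moreover have "l \<le> n" using maps_to assms hb by fastforce
  moreover have "stack_neighbour (a, n) (b, l)"
    using image_stack_neighbour[OF assms order_refl] hb by simp
  ultimately show ?thesis
    using stack_neighbour_top[OF assms] unfolding below_left_def below_right_def by simp
qed

lemma below_left_bottom_uniform:
  assumes "\<not> 3 dvd n" "a < 3"
  shows "below_left (a, 0) \<longleftrightarrow> below_left (0, 0)"
proof -
  have step: "below_left (b, 0)" if "b < 3" "below_left ((b + n) mod 3, 0)" for b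
    using below_some_side_at_top[OF that(1)]
  proof
    assume "below_left (b, n)"
    then show ?thesis using below_left_down[of b 0 n] that(1) by simp
  next
    assume "below_right (b, n)"
    then have "below_right ((b + n) mod 3, 0)" using below_right_down[of b 0 n] that(1) by simp
    then show ?thesis using not_below_both_at_bottom[of "(b + n) mod 3"] that(2) by simp
  qed
  have step': "below_left (b, 0)" if "b < 3" "below_left ((b + n mod 3) mod 3, 0)" for b
    using step[OF that(1)] that(2) by (simp add: mod_add_right_eq)
  have "n mod 3 \<noteq> 0" using assms(1) dvd_eq_mod_eq_0 by blast
  then consider "n mod 3 = 1" | "n mod 3 = 2" using less_3_cases[of "n mod 3"] by fastforce
  then show ?thesis
  proof cases
    case 1
    then have "below_left (1, 0) \<Longrightarrow> below_left (0, 0)" "below_left (2, 0) \<Longrightarrow> below_left (1, 0)"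
      "below_left (0, 0) \<Longrightarrow> below_left (2, 0)"
      using step'[of 0] step'[of 1] step'[of 2] by (simp_all add: numeral_2_eq_2)
    then show ?thesis using less_3_cases[OF assms(2)] by (auto simp: numeral_2_eq_2)
  next
    case 2
    then have "below_left (2, 0) \<Longrightarrow> below_left (0, 0)" "below_left (0, 0) \<Longrightarrow> below_left (1, 0)"
      "below_left (1, 0) \<Longrightarrow> below_left (2, 0)"
      using step'[of 0] step'[of 1] step'[of 2] by (simp_all add: numeral_2_eq_2)
    then show ?thesis using less_3_cases[OF assms(2)] by (auto simp: numeral_2_eq_2)
  qed
qed

lemma row_shift_2_if_below_left_at_bottom:
  assumes bottom: "\<forall>a<3. below_left (a, 0)" and x: "x \<in> std_stack n"
  shows "h x = row_shift 2 x"
proof -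
  have not_right: "\<not> below_right (c, k)" if "c < 3" "k \<le> n" for c k
  proof
    assume "below_right (c, k)"
    then have "below_right ((c + k) mod 3, 0)" using below_right_down[of c 0 k] that by simp
    then show False using bottom not_below_both_at_bottom[of "(c + k) mod 3"] by simp
  qed
  have left: "below_left (c, k)" if "c < 3" "k \<le> n" for c k
    using below_some_side_at_top[of c] not_right[of c n] below_left_down[of c k "n - k"] that by simp
  obtain c k where x: "x = (c, k)" "c < 3" "k \<le> n" using x by (cases x) simp
  obtain b l where hx: "h x = (b, l)" by fastforce
  show ?thesis
    using stack_neighbour_below_one_side(1)[of c k b l] image_stack_neighbour[of c k]
      left[of c k] not_right[of c k] x hx
    unfolding below_left_def below_right_def by simp
qed

lemma row_shift_1_if_not_below_left_at_bottom:
  assumes bottom: "\<forall>a<3. \<not> below_left (a, 0)" and x: "x \<in> std_stack n"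
  shows "h x = row_shift 1 x"
proof -
  have not_left: "\<not> below_left (c, k)" if "c < 3" "k \<le> n" for c k
    using below_left_down[of c 0 k] bottom that by auto
  have right: "below_right (c, k)" if "c < 3" "k \<le> n" for c k
  proof -
    let ?b = "(c + 2 * (n - k)) mod 3"
    have "below_right (?b, n)" using below_some_side_at_top[of ?b] not_left[of ?b n] by simp
    then have "below_right ((?b + (n - k)) mod 3, k)" using below_right_down[of ?b k "n - k"] that by simp
    moreover have "(?b + (n - k)) mod 3 = (c + 3 * (n - k)) mod 3"
      by (simp add: mod_add_left_eq)
    then have "(?b + (n - k)) mod 3 = c"
      using that(1) by simp
    ultimately show ?thesis by simp
  qed
  obtain c k where x: "x = (c, k)" "c < 3" "k \<le> n" using x by (cases x) simp
  obtain b l where hx: "h x = (b, l)" by fastforce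
  show ?thesis
    using stack_neighbour_below_one_side(2)[of c k b l] image_stack_neighbour[of c k]
      right[of c k] not_left[of c k] x hx
    unfolding below_left_def below_right_def by simp
qed

lemma fpf_endo_is_row_shift:
  assumes "\<not> 3 dvd n"
  shows "(\<forall>x\<in>std_stack n. h x = row_shift 1 x) \<or> (\<forall>x\<in>std_stack n. h x = row_shift 2 x)"
  using below_left_bottom_uniform[OF assms] row_shift_2_if_below_left_at_bottom
    row_shift_1_if_not_below_left_at_bottom by (cases "below_left (0, 0)") blast+

end

lemma std_stack_fpf_endo_inj:
  assumes "\<not> 3 dvd n" and maps: "h ` std_stack n \<subseteq> std_stack n"
    and mono: "\<forall>x\<in>std_stack n. \<forall>y\<in>std_stack n. (x, y) \<in> std_stack_rel n \<longrightarrow> (h x, h y) \<in> std_stack_rel n"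
    and no_fixpoint: "\<forall>x\<in>std_stack n. h x \<noteq> x"
  shows "inj_on h (std_stack n)"
proof -
  have "(\<forall>x\<in>std_stack n. h x = row_shift 1 x) \<or> (\<forall>x\<in>std_stack n. h x = row_shift 2 x)"
  proof (rule fpf_endo_is_row_shift)
    show "\<And>x. x \<in> std_stack n \<Longrightarrow> h x \<in> std_stack n" using maps by blast
    show "\<And>x y. x \<in> std_stack n \<Longrightarrow> y \<in> std_stack n \<Longrightarrow> stack_le x y \<Longrightarrow> stack_le (h x) (h y)"
      using mono unfolding std_stack_rel_def by blast
  qed (use assms in blast)+
  then obtain d where "\<forall>x\<in>std_stack n. h x = row_shift d x" by blast
  then show ?thesis
    using inj_on_cong[of "std_stack n" h "row_shift d"] row_shift_inj_on by simp
qed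

lemma std_stack_no_automorphic_proper_retract:
  assumes "\<not> 3 dvd n" "proper_retract (std_stack n) (std_stack_rel n) Q"
  shows "\<not> automorphic Q (Restr (std_stack_rel n) Q)"
  by (rule no_automorphic_proper_retract[OF _ std_stack_fpf_endo_inj[OF assms(1)] assms(2)])
    (simp add: std_stack_def)

subsection \<open>A retract onto a tower of antichains\<close>

definition std_retraction_at :: "nat \<Rightarrow> nat \<Rightarrow> nat \<Rightarrow> nat \<times> nat" where
  "std_retraction_at a r k =
    (if r = 0 then (if a = 2 then (0, k) else (a, k))
     else if r = 1 then (if a = 0 then (0, k) else if a = 1 then (1, k + 1) else (0, k - 1))
     else (if a = 0 then (0, k + 1) else if a = 1 then (1, k) else (0, k - 1)))"

definition std_retraction :: "nat \<times> nat \<Rightarrow> nat \<times> nat" where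
  "std_retraction x = std_retraction_at (fst x) (snd x mod 3) (snd x)"

definition std_retract :: "nat \<Rightarrow> (nat \<times> nat) set" where
  "std_retract n = {(a, k) \<in> std_stack n.
     (k mod 3 = 0 \<and> a \<le> 1) \<or> (k mod 3 = 1 \<and> a = 0) \<or> (k mod 3 = 2 \<and> a = 1)}"

lemma std_retraction_at_mono:
  assumes "a < 3" "b < 3" "r < 3" "s < 3" "stack_le (a, 3 * i + r) (b, 3 * j + s)"
  shows "stack_le (std_retraction_at a r (3 * i + r)) (std_retraction_at b s (3 * j + s))"
proof -
  have "a = 0 \<or> a = 1 \<or> a = 2" "b = 0 \<or> b = 1 \<or> b = 2" "r = 0 \<or> r = 1 \<or> r = 2" "s = 0 \<or> s = 1 \<or> s = 2"
    using assms(1-4) by auto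
  then show ?thesis
    using assms(5) by (elim disjE) (simp_all add: stack_le_def std_retraction_at_def, presburger+)
qed

lemma std_retraction_mono:
  assumes "x \<in> std_stack n" "y \<in> std_stack n" "stack_le x y"
  shows "stack_le (std_retraction x) (std_retraction y)"
proof -
  obtain a k b l where xy: "x = (a, k)" "y = (b, l)" by fastforce
  obtain i r where k: "k = 3 * i + r" "r < 3" "k mod 3 = r" by (rule mod_3_decomp)
  obtain j s where l: "l = 3 * j + s" "s < 3" "l mod 3 = s" by (rule mod_3_decomp)
  show ?thesis
    using std_retraction_at_mono[of a b r s i j] assms xy k l by (simp add: std_retraction_def)
qed

lemma std_retraction_at_in_retract:
  assumes "a < 3" "r < 3" "3 * i + r \<le> 3 * N"
  shows "std_retraction_at a r (3 * i + r) \<in> std_retract (3 * N)"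
proof -
  have "a = 0 \<or> a = 1 \<or> a = 2" "r = 0 \<or> r = 1 \<or> r = 2" using assms(1,2) by auto
  then show ?thesis
    using assms(3) by (elim disjE) (simp_all add: std_retraction_at_def std_retract_def, presburger+)
qed

lemma std_retraction_in_retract:
  assumes "3 dvd n" "x \<in> std_stack n"
  shows "std_retraction x \<in> std_retract n"
proof -
  obtain a k where x: "x = (a, k)" by fastforce
  obtain N where N: "n = 3 * N" using assms(1) by blast
  obtain i r where k: "k = 3 * i + r" "r < 3" "k mod 3 = r" by (rule mod_3_decomp)
  show ?thesis
    using std_retraction_at_in_retract[of a r i N] assms(2) x k N by (simp add: std_retraction_def)
qed

lemma std_retraction_fixes_retract:
  assumes "x \<in> std_retract n"
  shows "std_retraction x = x"
  using assms by (auto simp: std_retract_def std_retraction_def std_retraction_at_def)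

lemma std_retract_proper_retract:
  assumes "3 dvd n"
  shows "proper_retract (std_stack n) (std_stack_rel n) (std_retract n)"
proof -
  have "(2, 0) \<in> std_stack n - std_retract n"
    by (simp add: std_retract_def)
  moreover have "std_retract n \<subseteq> std_stack n"
    by (auto simp: std_retract_def)
  ultimately show ?thesis
    unfolding proper_retract_def is_retract_def std_stack_rel_def
    using std_retraction_in_retract[OF assms] std_retraction_fixes_retract std_retraction_mono
    by (intro conjI exI[of _ std_retraction]) auto
qed

definition antichain2 :: "(nat \<times> nat) set \<times> (nat \<times> nat) rel" where
  "antichain2 = ({(0, 0), (1, 0)}, Id_on {(0, 0), (1, 0)})"

definition antichain_tower :: "nat \<Rightarrow> ((nat \<times> nat) set \<times> (nat \<times> nat) rel) list" where
  "antichain_tower n = replicate (2 * (n div 3) + 1) antichain2"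

definition tower_position :: "nat \<times> nat \<Rightarrow> nat \<times> (nat \<times> nat)" where
  "tower_position x = (2 * (snd x div 3) + (if snd x mod 3 = 0 then 0 else 1), (fst x, 0))"

lemma antichain_tower_nth: "t < 2 * (n div 3) + 1 \<Longrightarrow> antichain_tower n ! t = antichain2"
  unfolding antichain_tower_def by (rule nth_replicate)

lemma length_antichain_tower: "length (antichain_tower n) = 2 * (n div 3) + 1"
  unfolding antichain_tower_def by (rule length_replicate)

lemma mem_antichain_tower_carrier:
  "(t, z) \<in> ord_sum_carrier (antichain_tower n) \<longleftrightarrow>
     t < 2 * (n div 3) + 1 \<and> (z = (0, 0) \<or> z = (1, 0))"
  using antichain_tower_nth[of t n]
  by (auto simp: mem_ord_sum_carrier length_antichain_tower antichain2_def)

lemma mem_antichain_tower_rel: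
  "((t, z), (t', z')) \<in> ord_sum_rel (antichain_tower n) \<longleftrightarrow>
     (t, z) \<in> ord_sum_carrier (antichain_tower n) \<and> (t', z') \<in> ord_sum_carrier (antichain_tower n)
     \<and> (t = t' \<and> z = z' \<or> t < t')"
  using antichain_tower_nth[of t n] mem_antichain_tower_carrier[of t z n]
  by (auto simp: mem_ord_sum_rel antichain2_def)

lemma stack_le_on_retract:
  assumes "(r = 0 \<and> a \<le> 1) \<or> (r = 1 \<and> a = 0) \<or> (r = 2 \<and> a = (1::nat))"
    and "(s = 0 \<and> b \<le> 1) \<or> (s = 1 \<and> b = 0) \<or> (s = 2 \<and> b = (1::nat))"
  shows "stack_le (a, 3 * i + r) (b, 3 * j + s) \<longleftrightarrow>
    (2 * i + (if r = 0 then 0 else 1) = 2 * j + (if s = 0 then 0 else 1) \<and> a = b) \<or>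
      2 * i + (if r = 0 then 0 else 1) < 2 * j + (if s = 0 then 0 else (1::nat))"
proof -
  have "a = 0 \<or> a = 1" "b = 0 \<or> b = 1" "r = 0 \<or> r = 1 \<or> r = 2" "s = 0 \<or> s = 1 \<or> s = 2"
    using assms by auto
  then show ?thesis using assms by (elim disjE) (simp_all add: stack_le_def, presburger+)
qed

lemma std_retract_decomp:
  assumes "x \<in> std_retract n"
  obtains a i r where "x = (a, 3 * i + r)" "(r = 0 \<and> a \<le> 1) \<or> (r = 1 \<and> a = 0) \<or> (r = 2 \<and> a = 1)"
    "3 * i + r \<le> n" "tower_position x = (2 * i + (if r = 0 then 0 else 1), (a, 0))"
proof -
  obtain a k where x: "x = (a, k)" by fastforce
  obtain i r where k: "k = 3 * i + r" "r < 3" "k mod 3 = r" by (rule mod_3_decomp)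
  then have "k div 3 = i" by simp
  then show ?thesis
    using that assms x k by (auto simp: std_retract_def tower_position_def)
qed

lemma tower_position_in_carrier:
  assumes "3 dvd n" "x \<in> std_retract n"
  shows "tower_position x \<in> ord_sum_carrier (antichain_tower n)"
proof -
  obtain a i r where x: "x = (a, 3 * i + r)" "(r = 0 \<and> a \<le> 1) \<or> (r = 1 \<and> a = 0) \<or> (r = 2 \<and> a = 1)"
    "3 * i + r \<le> n" "tower_position x = (2 * i + (if r = 0 then 0 else 1), (a, 0))"
    using std_retract_decomp[OF assms(2)] by blast
  obtain N where N: "n = 3 * N" using assms(1) by blast
  have "2 * i + (if r = 0 then 0 else 1) < 2 * N + 1"
    using x(2,3) N by auto
  then show ?thesis
    using x(2,4) N by (auto simp: mem_antichain_tower_carrier)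
qed

lemma tower_position_order_iso:
  assumes "3 dvd n"
  shows "order_iso (std_retract n) (Restr (std_stack_rel n) (std_retract n))
    (ord_sum_carrier (antichain_tower n)) (ord_sum_rel (antichain_tower n)) tower_position"
proof -
  obtain N where N: "n = 3 * N" using assms by blast
  have retract_std_stack: "std_retract n \<subseteq> std_stack n"
    by (auto simp: std_retract_def)
  have ord: "(x, y) \<in> std_stack_rel n \<longleftrightarrow>
      (tower_position x, tower_position y) \<in> ord_sum_rel (antichain_tower n)"
    if xr: "x \<in> std_retract n" and yr: "y \<in> std_retract n" for x y
  proof -
    obtain a i r where x: "x = (a, 3 * i + r)" "(r = 0 \<and> a \<le> 1) \<or> (r = 1 \<and> a = 0) \<or> (r = 2 \<and> a = 1)"
      "tower_position x = (2 * i + (if r = 0 then 0 else 1), (a, 0))"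
      using std_retract_decomp[OF xr] by blast
    obtain b j s where y: "y = (b, 3 * j + s)" "(s = 0 \<and> b \<le> 1) \<or> (s = 1 \<and> b = 0) \<or> (s = 2 \<and> b = 1)"
      "tower_position y = (2 * j + (if s = 0 then 0 else 1), (b, 0))"
      using std_retract_decomp[OF yr] by blast
    show ?thesis
      using xr yr retract_std_stack stack_le_on_retract[OF x(2) y(2), of i j] x(1,3) y(1,3)
        tower_position_in_carrier[OF assms xr] tower_position_in_carrier[OF assms yr]
      by (auto simp: std_stack_rel_def mem_antichain_tower_rel)
  qed
  have "inj_on tower_position (std_retract n)"
  proof (rule inj_onI)
    fix x y assume xy: "x \<in> std_retract n" "y \<in> std_retract n" "tower_position x = tower_position y"
    obtain t z where tz: "tower_position y = (t, z)" by (cases "tower_position y") blast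
    then have "(t, z) \<in> ord_sum_carrier (antichain_tower n)"
      using tower_position_in_carrier[OF assms xy(2)] by simp
    then have "((t, z), (t, z)) \<in> ord_sum_rel (antichain_tower n)"
      by (simp add: mem_antichain_tower_rel)
    then have "(x, y) \<in> std_stack_rel n" "(y, x) \<in> std_stack_rel n"
      using ord[OF xy(1,2)] ord[OF xy(2,1)] xy(3) tz by simp_all
    then show "x = y" by (auto simp: std_stack_rel_def stack_le_def)
  qed
  moreover have "ord_sum_carrier (antichain_tower n) \<subseteq> tower_position ` std_retract n"
  proof
    fix p assume "p \<in> ord_sum_carrier (antichain_tower n)"
    then obtain t e where p: "p = (t, (e, 0))" "t < 2 * N + 1" "e \<le> 1"
      using N by (cases p) (auto simp: mem_antichain_tower_carrier)
    show "p \<in> tower_position ` std_retract n"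
    proof (cases "even t")
      case True
      then obtain i where "t = 2 * i" by blast
      then have "(e, 3 * i) \<in> std_retract n" "tower_position (e, 3 * i) = p"
        using p N by (simp_all add: std_retract_def tower_position_def)
      then show ?thesis by (metis imageI)
    next
      case False
      then obtain i where i: "t = 2 * i + 1" using oddE by blast
      have "(3 * i + 1 + e) mod 3 = 1 + e" "(3 * i + 1 + e) div 3 = i" using p(3) by presburger+
      then have "(e, 3 * i + 1 + e) \<in> std_retract n" "tower_position (e, 3 * i + 1 + e) = p"
        using p N i by (simp_all add: std_retract_def tower_position_def, presburger)
      then show ?thesis by (metis imageI)
    qed
  qed
  ultimately show ?thesis
    unfolding order_iso_def bij_betw_def
    using tower_position_in_carrier[OF assms] ord by auto
qed

lemma std_stack_tower_retract:
  assumes "3 dvd n"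
  shows "\<exists>Q. proper_retract (std_stack n) (std_stack_rel n) Q \<and> iso_to_tower Q (Restr (std_stack_rel n) Q)"
proof -
  have "\<forall>p\<in>set (antichain_tower n). is_section (fst p) (snd p)"
    by (simp add: antichain_tower_def antichain2_def is_section_def)
  moreover have "antichain_tower n \<noteq> []"
    by (simp add: antichain_tower_def)
  ultimately have "iso_to_tower (std_retract n) (Restr (std_stack_rel n) (std_retract n))"
    using tower_position_order_iso[OF assms] unfolding iso_to_tower_def isomorphic_def by blast
  then show ?thesis
    using std_retract_proper_retract[OF assms] by blast
qed

lemma std_stack_tower_retract_iff:
  "(\<exists>Q. proper_retract (std_stack n) (std_stack_rel n) Q \<and> iso_to_tower Q (Restr (std_stack_rel n) Q))
    \<longleftrightarrow> 3 dvd n"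
  using std_stack_tower_retract std_stack_no_automorphic_proper_retract iso_to_tower_automorphic
  by blast

lemma std_stack_minimal_automorphic_iff:
  "minimal_automorphic (std_stack n) (std_stack_rel n) \<longleftrightarrow> \<not> 3 dvd n"
proof
  assume min: "minimal_automorphic (std_stack n) (std_stack_rel n)"
  show "\<not> 3 dvd n"
  proof
    assume "3 dvd n"
    then obtain Q where "proper_retract (std_stack n) (std_stack_rel n) Q"
      "iso_to_tower Q (Restr (std_stack_rel n) Q)"
      using std_stack_tower_retract by blast
    then show False
      using min iso_to_tower_automorphic unfolding minimal_automorphic_def by blast
  qed
next
  assume "\<not> 3 dvd n"
  then show "minimal_automorphic (std_stack n) (std_stack_rel n)"
    unfolding minimal_automorphic_def
    using std_stack_automorphic std_stack_no_automorphic_proper_retract by blast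
qed

section \<open>Every 6-stack is isomorphic to the standard one\<close>

lemma sorted_wrt_strict_distinct: "sorted_wrt (\<lambda>x y. (x, y) \<in> strict r) xs \<Longrightarrow> distinct xs"
  by (induction xs) (auto simp: strict_def)

lemma sorted_wrt_last:
  "sorted_wrt R xs \<Longrightarrow> z \<in> set xs \<Longrightarrow> z = last xs \<or> R z (last xs)"
  by (induction xs) auto

lemma sorted_wrt_strict_is_chain:
  assumes "refl_on S r" "set xs \<subseteq> S" "sorted_wrt (\<lambda>x y. (x, y) \<in> strict r) xs"
  shows "is_chain S r (set xs)"
  using assms by (induction xs) (auto simp: is_chain_def strict_def refl_on_def)

lemma is_chain_extends_to_maxchain:
  assumes "finite S" "is_chain S r C"
  shows "\<exists>D. is_maxchain S r D \<and> C \<subseteq> D"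
proof -
  let ?P = "\<lambda>D. is_chain S r D \<and> C \<subseteq> D"
  have "\<forall>D. ?P D \<longrightarrow> card D < Suc (card S)"
    using assms(1) by (auto simp: is_chain_def intro: card_mono le_imp_less_Suc)
  then obtain D where D: "?P D" and D_max: "\<forall>D'. ?P D' \<longrightarrow> card D' \<le> card D"
    using ex_has_greatest_nat[of ?P C card "Suc (card S)"] assms(2) by blast
  have "\<not> (is_chain S r D' \<and> D \<subset> D')" for D'
  proof
    assume D': "is_chain S r D' \<and> D \<subset> D'"
    then have "finite D'" using assms(1) by (auto simp: is_chain_def intro: finite_subset)
    then have "card D < card D'" using D' psubset_card_mono by blast
    then show False using D D' D_max by fastforce
  qed
  then show ?thesis using D unfolding is_maxchain_def by blast
qed

locale finite_poset =
  fixes S :: "'a set" and r :: "'a rel"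
  assumes fin_poset: "fin_poset S r"

begin

lemma finite_carrier: "finite S" and partial_order: "partial_order_on S r"
  using fin_poset unfolding fin_poset_def by auto

lemma rel_subset: "r \<subseteq> S \<times> S" and refl: "x \<in> S \<Longrightarrow> (x, x) \<in> r"
  and strict_trans: "(x, y) \<in> strict r \<Longrightarrow> (y, z) \<in> strict r \<Longrightarrow> (x, z) \<in> strict r"
  using partial_order
  unfolding partial_order_on_def preorder_on_def refl_on_def trans_def antisym_def strict_def by blast+

abbreviation rank :: "'a \<Rightarrow> nat" where
  "rank \<equiv> elem_rank S r"

definition chain_to :: "'a \<Rightarrow> nat \<Rightarrow> bool" where
  "chain_to p m \<longleftrightarrow> (\<exists>xs. length xs = Suc m \<and> set xs \<subseteq> S
     \<and> sorted_wrt (\<lambda>x y. (x, y) \<in> strict r) xs \<and> last xs = p)"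

lemma chain_to_le_card: "chain_to p m \<Longrightarrow> m \<le> card S"
proof -
  assume "chain_to p m"
  then obtain xs where xs: "length xs = Suc m" "set xs \<subseteq> S" "sorted_wrt (\<lambda>x y. (x, y) \<in> strict r) xs"
    unfolding chain_to_def by blast
  then have "card (set xs) = Suc m"
    using distinct_card[OF sorted_wrt_strict_distinct[OF xs(3)]] by simp
  then show ?thesis using card_mono[OF finite_carrier xs(2)] by simp
qed

lemma chain_to_rank: "p \<in> S \<Longrightarrow> chain_to p (rank p)"
proof -
  assume "p \<in> S"
  then have "chain_to p 0" unfolding chain_to_def by (intro exI[of _ "[p]"]) simp
  then show ?thesis
    unfolding elem_rank_def chain_to_def[symmetric] using GreatestI_nat chain_to_le_card by blast
qed

lemma chain_to_le_rank: "chain_to p m \<Longrightarrow> m \<le> rank p"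
  unfolding elem_rank_def chain_to_def[symmetric] using Greatest_le_nat chain_to_le_card by blast

lemma rank_strict_mono:
  assumes "y \<in> S" "(x, y) \<in> strict r"
  shows "rank x < rank y"
proof -
  have "x \<in> S" using assms(2) rel_subset unfolding strict_def by blast
  then obtain xs where xs: "length xs = Suc (rank x)" "set xs \<subseteq> S"
    "sorted_wrt (\<lambda>x y. (x, y) \<in> strict r) xs" "last xs = x"
    using chain_to_rank unfolding chain_to_def by blast
  have "(z, y) \<in> strict r" if "z \<in> set xs" for z
  proof -
    have "z = last xs \<or> (z, last xs) \<in> strict r"
      using sorted_wrt_last[OF xs(3) that] .
    then show ?thesis using assms(2) xs(4) strict_trans by blast
  qed
  then have "chain_to y (Suc (rank x))"
    unfolding chain_to_def using xs assms(1)
    by (intro exI[of _ "xs @ [y]"]) (auto simp: sorted_wrt_append)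
  then show ?thesis using chain_to_le_rank by fastforce
qed

lemma rank_predecessor:
  assumes "p \<in> S" "rank p = Suc m"
  shows "\<exists>q\<in>S. (q, p) \<in> strict r \<and> rank q = m"
proof -
  obtain xs where xs: "length xs = Suc (Suc m)" "set xs \<subseteq> S"
    "sorted_wrt (\<lambda>x y. (x, y) \<in> strict r) xs" "last xs = p"
    using chain_to_rank[OF assms(1)] assms(2) unfolding chain_to_def by auto
  define ys where "ys = butlast xs"
  have "xs \<noteq> []" "length ys = Suc m" using xs(1) by (auto simp: ys_def)
  then have ys: "xs = ys @ [p]" "ys \<noteq> []"
    using append_butlast_last_id[of xs] xs(4) by (auto simp: ys_def[symmetric])
  let ?q = "last ys"
  have "?q \<in> set ys" using ys(2) by simp
  moreover have "chain_to ?q m"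
    unfolding chain_to_def using xs ys by (intro exI[of _ ys]) (auto simp: sorted_wrt_append)
  ultimately have "?q \<in> S" "(?q, p) \<in> strict r" "m \<le> rank ?q"
    using xs ys chain_to_le_rank by (auto simp: sorted_wrt_append)
  moreover have "rank ?q < rank p" using rank_strict_mono[OF assms(1)] calculation(2) .
  ultimately show ?thesis using assms(2) by (intro bexI[of _ ?q]) auto
qed

lemma rank_le_if_ranked:
  assumes "ranked S r n" "p \<in> S"
  shows "rank p \<le> n"
proof -
  obtain xs where xs: "length xs = Suc (rank p)" "set xs \<subseteq> S"
    "sorted_wrt (\<lambda>x y. (x, y) \<in> strict r) xs"
    using chain_to_rank[OF assms(2)] unfolding chain_to_def by blast
  have "is_chain S r (set xs)"
    using sorted_wrt_strict_is_chain partial_order xs(2,3)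
    unfolding partial_order_on_def preorder_on_def by blast
  then obtain D where "is_maxchain S r D" "set xs \<subseteq> D"
    using is_chain_extends_to_maxchain finite_carrier by blast
  moreover have "card (set xs) = Suc (rank p)"
    using distinct_card[OF sorted_wrt_strict_distinct[OF xs(3)]] xs(1) by simp
  moreover have "finite D" using calculation(1) finite_carrier
    unfolding is_maxchain_def is_chain_def by (blast intro: finite_subset)
  ultimately have "Suc (rank p) \<le> card D" using card_mono by metis
  moreover have "card D = Suc n" using assms(1) \<open>is_maxchain S r D\<close> unfolding ranked_def by blast
  ultimately show ?thesis by simp
qed

end

lemma crown6_rel_minimal: "w < 3 \<Longrightarrow> (u, w) \<in> crown6_rel \<Longrightarrow> u = w"
  by (auto simp: crown6_rel_def crown6_carrier_def)

lemma crown6_rel_lower_exists: "3 \<le> w \<Longrightarrow> w \<le> 5 \<Longrightarrow> \<exists>u<3. (u, w) \<in> crown6_rel"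
proof -
  assume "3 \<le> w" "w \<le> 5"
  then have "w = 3 \<or> w = 4 \<or> w = 5" by auto
  moreover have "(0, 3) \<in> crown6_rel" "(1, 4) \<in> crown6_rel" "(0, 5) \<in> crown6_rel"
    by (simp_all add: crown6_rel_def)
  ultimately show ?thesis by (metis zero_less_numeral one_less_numeral_iff semiring_norm(77))
qed

lemma crown6_rel_between:
  assumes "u < 3" "w \<in> {3, 4, 5}"
  shows "(u, w) \<in> crown6_rel \<longleftrightarrow> w \<noteq> 3 + (u + 1) mod 3"
proof -
  have "u = 0 \<or> u = 1 \<or> u = 2" "w = 3 \<or> w = 4 \<or> w = 5" using assms by auto
  then show ?thesis by (elim disjE) (auto simp: crown6_rel_def)
qed

locale six_stack_poset =
  fixes S :: "'a set" and r :: "'a rel" and n :: nat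
  assumes six_stack: "six_stack S r n"

begin

sublocale finite_poset S r
  using six_stack unfolding six_stack_def by unfold_locales blast

definition level :: "nat \<Rightarrow> 'a set" where
  "level k = {p \<in> S. rank p = k}"

lemma level_subset: "level k \<subseteq> S"
  unfolding level_def by blast

lemma finite_level: "finite (level k)"
  using finite_subset[OF level_subset finite_carrier] .

lemma rank_le: "p \<in> S \<Longrightarrow> rank p \<le> n"
  using rank_le_if_ranked six_stack unfolding six_stack_def by blast

abbreviation crown_iso :: "nat \<Rightarrow> ('a \<Rightarrow> nat) \<Rightarrow> bool" where
  "crown_iso k \<psi> \<equiv> order_iso (level k \<union> level (Suc k)) (Restr r (level k \<union> level (Suc k)))
     crown6_carrier crown6_rel \<psi>"

lemma crown_iso_exists:
  assumes "k < n"
  obtains \<psi> where "crown_iso k \<psi>"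
proof -
  have "rank_slice S r k (Suc k) = level k \<union> level (Suc k)"
    unfolding rank_slice_def level_def by auto
  then show ?thesis
    using six_stack assms that unfolding six_stack_def isomorphic_def by auto
qed

lemma crown_iso_bij: "crown_iso k \<psi> \<Longrightarrow> bij_betw \<psi> (level k \<union> level (Suc k)) {0..5}"
  unfolding order_iso_def crown6_carrier_def by blast

lemma crown_iso_rel:
  "crown_iso k \<psi> \<Longrightarrow> x \<in> level k \<union> level (Suc k) \<Longrightarrow> y \<in> level k \<union> level (Suc k) \<Longrightarrow>
    (x, y) \<in> r \<longleftrightarrow> (\<psi> x, \<psi> y) \<in> crown6_rel"
  unfolding order_iso_def by blast

lemma crown_iso_lower:
  assumes iso: "crown_iso k \<psi>" and x: "x \<in> level k"
  shows "\<psi> x < 3"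
proof (rule ccontr)
  let ?A = "level k \<union> level (Suc k)"
  assume "\<not> \<psi> x < 3"
  moreover have "\<psi> x \<in> {0..5}" using crown_iso_bij[OF iso] x bij_betwE by blast
  ultimately obtain u where u: "u < 3" "(u, \<psi> x) \<in> crown6_rel"
    using crown6_rel_lower_exists[of "\<psi> x"] by auto
  then have "u \<in> \<psi> ` ?A" using crown_iso_bij[OF iso] unfolding bij_betw_def by simp
  then obtain v where v: "v \<in> ?A" "\<psi> v = u" by blast
  have "(v, x) \<in> r" using crown_iso_rel[OF iso v(1)] x v(2) u(2) by simp
  moreover have "v \<noteq> x" using v(2) u(1) \<open>\<not> \<psi> x < 3\<close> by auto
  ultimately have "rank v < rank x"
    using rank_strict_mono x level_subset unfolding strict_def by blast
  then show False using v(1) x unfolding level_def by auto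
qed

lemma crown_iso_upper:
  assumes iso: "crown_iso k \<psi>" and y: "y \<in> level (Suc k)"
  shows "3 \<le> \<psi> y"
proof (rule ccontr)
  let ?A = "level k \<union> level (Suc k)"
  assume "\<not> 3 \<le> \<psi> y"
  obtain q where q: "q \<in> S" "(q, y) \<in> strict r" "rank q = k"
    using rank_predecessor y unfolding level_def by blast
  then have "q \<in> ?A" "y \<in> ?A" "(q, y) \<in> r" "q \<noteq> y"
    using y unfolding level_def strict_def by auto
  then have "(\<psi> q, \<psi> y) \<in> crown6_rel" using crown_iso_rel[OF iso] by blast
  then have "\<psi> q = \<psi> y" using crown6_rel_minimal \<open>\<not> 3 \<le> \<psi> y\<close> by simp
  then show False
    using crown_iso_bij[OF iso] \<open>q \<in> ?A\<close> \<open>y \<in> ?A\<close> \<open>q \<noteq> y\<close>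
    unfolding bij_betw_def inj_on_def by blast
qed

lemma crown_iso_levels:
  assumes iso: "crown_iso k \<psi>"
  shows "\<psi> ` level k = {0, 1, 2}" "\<psi> ` level (Suc k) = {3, 4, 5}"
proof -
  have parts: "X = A \<and> Y = B" if "X \<subseteq> A" "Y \<subseteq> B" "X \<union> Y = A \<union> B" "A \<inter> B = {}"
    for X Y A B :: "nat set"
    using that by blast
  have "\<psi> ` level k \<subseteq> {..<3}"
    using crown_iso_lower[OF iso] by auto
  moreover have "\<psi> ` level (Suc k) \<subseteq> {3..5}"
    using crown_iso_upper[OF iso] crown_iso_bij[OF iso] unfolding bij_betw_def by auto
  moreover have "\<psi> ` level k \<union> \<psi> ` level (Suc k) = {..<3} \<union> {3..5}"
    using crown_iso_bij[OF iso] unfolding bij_betw_def by (auto simp: image_Un)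
  moreover have "{..<3::nat} = {0, 1, 2}" "{3..5::nat} = {3, 4, 5}" by auto
  ultimately show "\<psi> ` level k = {0, 1, 2}" "\<psi> ` level (Suc k) = {3, 4, 5}"
    using parts by simp_all
qed

lemma crown_iso_strict_iff:
  assumes iso: "crown_iso k \<psi>" and x: "x \<in> level k" and y: "y \<in> level (Suc k)"
  shows "(x, y) \<in> strict r \<longleftrightarrow> \<psi> y \<noteq> 3 + (\<psi> x + 1) mod 3"
proof -
  have "\<psi> y \<in> \<psi> ` level (Suc k)" using y by (rule imageI)
  then have "\<psi> y \<in> {3, 4, 5}" using crown_iso_levels(2)[OF iso] by simp
  have "x \<noteq> y" using x y unfolding level_def by auto
  then have "(x, y) \<in> strict r \<longleftrightarrow> (x, y) \<in> r" unfolding strict_def by simp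
  also have "\<dots> \<longleftrightarrow> (\<psi> x, \<psi> y) \<in> crown6_rel"
    using crown_iso_rel[OF iso] x y by simp
  also have "\<dots> \<longleftrightarrow> \<psi> y \<noteq> 3 + (\<psi> x + 1) mod 3"
    by (rule crown6_rel_between[OF crown_iso_lower[OF iso x] \<open>\<psi> y \<in> {3, 4, 5}\<close>])
  finally show ?thesis .
qed

lemma unique_incomparable_above:
  assumes "k < n" "x \<in> level k"
  shows "\<exists>!y. y \<in> level (Suc k) \<and> (x, y) \<notin> strict r"
proof -
  obtain \<psi> where iso: "crown_iso k \<psi>" using crown_iso_exists[OF assms(1)] by blast
  have "3 + t \<in> {3, 4, 5}" if "t < 3" for t :: nat using that by auto
  then have "3 + (\<psi> x + 1) mod 3 \<in> \<psi> ` level (Suc k)"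
    using crown_iso_levels(2)[OF iso] by simp
  then obtain y where y: "y \<in> level (Suc k)" "\<psi> y = 3 + (\<psi> x + 1) mod 3" by auto
  show ?thesis
  proof (rule ex1I[of _ y])
    show "y \<in> level (Suc k) \<and> (x, y) \<notin> strict r"
      using y crown_iso_strict_iff[OF iso assms(2)] by simp
    fix y' assume "y' \<in> level (Suc k) \<and> (x, y') \<notin> strict r"
    then have y': "y' \<in> level (Suc k)" "(x, y') \<notin> strict r" by simp_all
    then have "\<psi> y' = \<psi> y" using y crown_iso_strict_iff[OF iso assms(2) y'(1)] by simp
    then show "y' = y"
      using y' y crown_iso_bij[OF iso] unfolding bij_betw_def inj_on_def by blast
  qed
qed

lemma card_level:
  assumes "k \<le> n"
  shows "card (level k) = 3"
proof -
  obtain m where m: "m < n" "k = m \<or> k = Suc m"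
  proof (cases "k < n")
    case True
    then show ?thesis using that by blast
  next
    case False
    moreover have "1 \<le> n" using six_stack unfolding six_stack_def by blast
    ultimately show ?thesis using that[of "n - 1"] assms by simp
  qed
  obtain \<psi> where iso: "crown_iso m \<psi>" using crown_iso_exists[OF m(1)] by blast
  have inj: "inj_on \<psi> (level m \<union> level (Suc m))"
    using crown_iso_bij[OF iso] bij_betw_imp_inj_on by blast
  have "card (level m) = 3" "card (level (Suc m)) = 3"
    using card_image[OF inj_on_subset[OF inj Un_upper1]] card_image[OF inj_on_subset[OF inj Un_upper2]]
      crown_iso_levels[OF iso] by simp_all
  then show ?thesis using m(2) by auto
qed

definition up :: "nat \<Rightarrow> 'a \<Rightarrow> 'a" where
  "up k x = (THE y. y \<in> level (Suc k) \<and> (x, y) \<notin> strict r)"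

lemma up_in_level: "k < n \<Longrightarrow> x \<in> level k \<Longrightarrow> up k x \<in> level (Suc k)"
  and up_not_above: "k < n \<Longrightarrow> x \<in> level k \<Longrightarrow> (x, up k x) \<notin> strict r"
  using theI'[OF unique_incomparable_above] unfolding up_def by blast+

lemma strict_iff_ne_up:
  assumes "k < n" "x \<in> level k" "y \<in> level (Suc k)"
  shows "(x, y) \<in> strict r \<longleftrightarrow> y \<noteq> up k x"
  using unique_incomparable_above[OF assms(1,2)] up_in_level[OF assms(1,2)] up_not_above[OF assms(1,2)]
    assms(3) by blast

lemma bij_betw_up:
  assumes "k < n"
  shows "bij_betw (up k) (level k) (level (Suc k))"
proof -
  obtain \<psi> where iso: "crown_iso k \<psi>" using crown_iso_exists[OF assms] by blast
  have "inj_on (up k) (level k)"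
  proof
    fix x x' assume x: "x \<in> level k" and x': "x' \<in> level k" and eq: "up k x = up k x'"
    let ?y = "up k x"
    have y: "?y \<in> level (Suc k)" using up_in_level[OF assms x] .
    have "\<psi> ?y = 3 + (\<psi> x + 1) mod 3"
      using crown_iso_strict_iff[OF iso x y] up_not_above[OF assms x] by simp
    moreover have "\<psi> ?y = 3 + (\<psi> x' + 1) mod 3"
      using crown_iso_strict_iff[OF iso x' y] up_not_above[OF assms x'] eq by simp
    ultimately have "\<psi> x = \<psi> x'"
      using mod_3_add_right_cancel[of "\<psi> x" "\<psi> x'" 1] crown_iso_lower[OF iso] x x' by simp
    then show "x = x'"
      using x x' crown_iso_bij[OF iso] unfolding bij_betw_def inj_on_def by blast
  qed
  moreover have "up k ` level k \<subseteq> level (Suc k)" using up_in_level[OF assms] by blast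
  moreover have "card (up k ` level k) = card (level (Suc k))"
    using card_image[OF calculation(1)] card_level assms by simp
  ultimately show ?thesis
    unfolding bij_betw_def using card_subset_eq[OF finite_level] by blast
qed

primrec label :: "nat \<Rightarrow> nat \<Rightarrow> 'a" where
  "label 0 = (SOME f. bij_betw f {..<3} (level 0))"
| "label (Suc k) = up k \<circ> label k \<circ> (\<lambda>a. (a + 2) mod 3)"

lemma bij_betw_label: "k \<le> n \<Longrightarrow> bij_betw (label k) {..<3} (level k)"
proof (induction k)
  case 0
  have "\<exists>f. bij_betw f {..<card (level 0)} (level 0)"
    using ex_bij_betw_nat_finite[OF finite_level] by (simp add: atLeast0LessThan)
  then have "\<exists>f. bij_betw f {..<3::nat} (level 0)" using card_level[of 0] by simp
  then show ?case unfolding label.simps by (rule someI_ex)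
next
  case (Suc k)
  then have "bij_betw (label k) {..<3} (level k)" "k < n" by simp_all
  then show ?case
    unfolding label.simps by (rule bij_betw_trans[OF bij_betw_add_2_mod_3 bij_betw_trans[OF _ bij_betw_up]])
qed

lemma label_in_level: "k \<le> n \<Longrightarrow> a < 3 \<Longrightarrow> label k a \<in> level k"
  using bij_betw_label bij_betwE by blast

lemma label_in_carrier: "k \<le> n \<Longrightarrow> a < 3 \<Longrightarrow> label k a \<in> S"
  using label_in_level level_subset by blast

lemma rank_label: "k \<le> n \<Longrightarrow> a < 3 \<Longrightarrow> rank (label k a) = k"
  using label_in_level unfolding level_def by blast

lemma label_eq_iff: "k \<le> n \<Longrightarrow> a < 3 \<Longrightarrow> b < 3 \<Longrightarrow> label k a = label k b \<longleftrightarrow> a = b"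
  using bij_betw_label bij_betw_imp_inj_on inj_on_eq_iff by (metis lessThan_iff)

lemma label_strict_Suc:
  assumes "k < n" "a < 3" "b < 3"
  shows "(label k a, label (Suc k) b) \<in> strict r \<longleftrightarrow> a \<noteq> (b + 2) mod 3"
proof -
  have a: "label k a \<in> level k" and c: "label k ((b + 2) mod 3) \<in> level k"
    using label_in_level assms by simp_all
  have "label (Suc k) b \<in> level (Suc k)"
    using label_in_level[OF Suc_leI[OF assms(1)] assms(3)] .
  then have "(label k a, label (Suc k) b) \<in> strict r \<longleftrightarrow> label (Suc k) b \<noteq> up k (label k a)"
    by (rule strict_iff_ne_up[OF assms(1) a])
  also have "\<dots> \<longleftrightarrow> up k (label k ((b + 2) mod 3)) \<noteq> up k (label k a)"
    by (simp only: label.simps comp_apply)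
  also have "\<dots> \<longleftrightarrow> label k ((b + 2) mod 3) \<noteq> label k a"
    using inj_on_eq_iff[OF bij_betw_imp_inj_on[OF bij_betw_up[OF assms(1)]] c a] by simp
  also have "\<dots> \<longleftrightarrow> a \<noteq> (b + 2) mod 3"
  proof -
    have "(b + 2) mod 3 < 3" "k \<le> n" using assms(1) by simp_all
    then show ?thesis using label_eq_iff[of k "(b + 2) mod 3" a] assms(2) by blast
  qed
  finally show ?thesis .
qed

lemma label_strict_gap:
  assumes "k + 2 \<le> l" "l \<le> n" "a < 3" "b < 3"
  shows "(label k a, label l b) \<in> strict r"
  using assms
proof (induction l arbitrary: b rule: dec_induct)
  case base
  obtain c where c: "c \<in> {0, 1, 2}" "a \<noteq> (c + 2) mod 3" "c \<noteq> (b + 2) mod 3"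
    using exists_row_between[OF base(2,3)] by blast
  then have "c < 3" by auto
  have "k < n" "Suc k < n" using base(1) by simp_all
  then have "(label k a, label (Suc k) c) \<in> strict r" "(label (Suc k) c, label (Suc (Suc k)) b) \<in> strict r"
    using label_strict_Suc[of k a c] label_strict_Suc[of "Suc k" c b] base(2,3) \<open>c < 3\<close> c(2,3)
    by blast+
  then show ?case using strict_trans by (metis add_2_eq_Suc')
next
  case (step l)
  let ?c = "(b + 1) mod 3"
  have "?c \<noteq> (b + 2) mod 3"
    by (rule notI) (use mod_3_add_right_cancel[of 1 2 b] in \<open>simp add: add.commute\<close>)
  moreover have "l < n" "?c < 3" using step.prems by simp_all
  ultimately have "(label l ?c, label (Suc l) b) \<in> strict r"
    using iffD2[OF label_strict_Suc[of l ?c b]] step.prems(3) by blast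
  moreover have "(label k a, label l ?c) \<in> strict r"
    using step.IH[of ?c] \<open>l < n\<close> \<open>?c < 3\<close> step.prems(2) by simp
  ultimately show ?case using strict_trans by blast
qed

lemma label_rel_iff_stack_le:
  assumes a: "a < 3" and b: "b < 3" and "k \<le> n" "l \<le> n"
  shows "(label k a, label l b) \<in> r \<longleftrightarrow> stack_le (a, k) (b, l)"
proof
  assume rel: "(label k a, label l b) \<in> r"
  show "stack_le (a, k) (b, l)"
  proof (cases "label k a = label l b")
    case True
    then have "k = l" using rank_label assms by metis
    then show ?thesis using True label_eq_iff assms by (simp add: stack_le_def)
  next
    case False
    then have strict: "(label k a, label l b) \<in> strict r" using rel unfolding strict_def by simp
    then have "k < l"
      using rank_strict_mono[of "label l b" "label k a"] label_in_level level_subset rank_label assms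
      by (metis subsetD)
    then consider "l = Suc k" | "k + 2 \<le> l" by linarith
    then show ?thesis
    proof cases
      case 1
      then have "a \<noteq> (b + 2) mod 3" using label_strict_Suc[of k a b] strict assms by simp
      then show ?thesis using 1 mod_3_ne_add_2_iff[OF a b] by (simp add: stack_le_def)
    next
      case 2
      then show ?thesis by (simp add: stack_le_def)
    qed
  qed
next
  assume "stack_le (a, k) (b, l)"
  then consider "(a, k) = (b, l)" | "k + 2 \<le> l" | "l = Suc k" "b \<noteq> (a + 1) mod 3"
    unfolding stack_le_def by auto
  then show "(label k a, label l b) \<in> r"
  proof cases
    case 1
    then show ?thesis using refl label_in_carrier[OF assms(3) a] by simp
  next
    case 2
    then show ?thesis using label_strict_gap assms unfolding strict_def by blast
  next
    case 3
    then have "a \<noteq> (b + 2) mod 3" using mod_3_ne_add_2_iff[OF a b] by simp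
    then show ?thesis using label_strict_Suc[of k a b] 3 assms unfolding strict_def by simp
  qed
qed

lemma std_stack_order_iso: "order_iso (std_stack n) (std_stack_rel n) S r (\<lambda>x. label (snd x) (fst x))"
  unfolding order_iso_def
proof (intro conjI ballI)
  let ?f = "\<lambda>x. label (snd x) (fst x)"
  show "bij_betw ?f (std_stack n) S"
    unfolding bij_betw_def
  proof
    show "inj_on ?f (std_stack n)"
    proof
      fix x y assume "x \<in> std_stack n" "y \<in> std_stack n" "?f x = ?f y"
      moreover obtain a k b l where xy: "x = (a, k)" "y = (b, l)" by fastforce
      ultimately have "a < 3" "k \<le> n" "b < 3" "l \<le> n" "label k a = label l b" by simp_all
      moreover from this have "k = l" using rank_label[of k a] rank_label[of l b] by simp
      ultimately show "x = y" using label_eq_iff[of l a b] xy by simp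
    qed
    show "?f ` std_stack n = S"
    proof
      show "?f ` std_stack n \<subseteq> S" using label_in_carrier by auto
      show "S \<subseteq> ?f ` std_stack n"
      proof
        fix p assume p: "p \<in> S"
        then have "rank p \<le> n" "p \<in> level (rank p)" using rank_le unfolding level_def by auto
        then obtain a where "a < 3" "p = label (rank p) a"
          using bij_betw_label unfolding bij_betw_def by blast
        then show "p \<in> ?f ` std_stack n"
          using \<open>rank p \<le> n\<close> by (intro image_eqI[of _ _ "(a, rank p)"]) auto
      qed
    qed
  qed
  fix x y assume "x \<in> std_stack n" "y \<in> std_stack n"
  moreover obtain a k b l where "x = (a, k)" "y = (b, l)" by fastforce
  ultimately show "(x, y) \<in> std_stack_rel n \<longleftrightarrow> (?f x, ?f y) \<in> r"
    using label_rel_iff_stack_le[of a b k l] by (simp add: std_stack_rel_def)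
qed

end

theorem proposition5p11:
  fixes S :: "'a set" and r :: "'a rel" and n :: nat
  assumes "six_stack S r n"
  shows "((\<exists>Q. proper_retract S r Q \<and> iso_to_tower Q (Restr r Q)) \<longleftrightarrow> 3 dvd n)
         \<and> (minimal_automorphic S r \<longleftrightarrow> \<not> 3 dvd n)"
proof -
  interpret six_stack_poset S r n using assms by unfold_locales
  note iso = std_stack_order_iso
  have "(\<exists>Q. proper_retract S r Q \<and> iso_to_tower Q (Restr r Q)) \<longleftrightarrow>
      (\<exists>Q. proper_retract (std_stack n) (std_stack_rel n) Q \<and> iso_to_tower Q (Restr (std_stack_rel n) Q))"
    using tower_retract_order_iso[OF iso] tower_retract_order_iso[OF order_iso_inv[OF iso]] by blast
  moreover have "minimal_automorphic S r \<longleftrightarrow> minimal_automorphic (std_stack n) (std_stack_rel n)"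
    using minimal_automorphic_order_iso[OF iso] minimal_automorphic_order_iso[OF order_iso_inv[OF iso]]
    by blast
  ultimately show ?thesis
    using std_stack_tower_retract_iff std_stack_minimal_automorphic_iff by simp
qed

end
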